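(* Let $P(s,h)=\{p_1,\dots,p_m\}$ and $P(h,t)=\{p'_1,\dots,p'_n\}$ be skyline path sets with $p_i=(w_i,c_i)$, $p'_j=(w'_j,c'_j)$, each sorted in weight-increasing order, let $p_i^j=(w_i+w'_j,c_i+c'_j)$ and $P_c=\{p_k^l:1\le k\le m,1\le l\le n\}$. Fix $i,j$ and let $P_3=\{p_k^l: k<i,\ l>j\}$ and $P_4=\{p_k^l: k>i,\ l<j\}$. Then $p_i^j$ is a skyline path of $P_c$ (not dominated by any path of $P_c$) if and only if it is not dominated by any path in $P_3\cup P_4$.
   Context: A path with value $(w,c)$ dominates a path with value $(w',c')$ if $w\le w'$, $c\le c'$, and at least one inequality is strict. A skyline path set is a set of paths no one of which dominates another (so, in two dimensions, when sorted by increasing weight the costs are non-increasing). Concatenation adds weights and costs. *)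

theory Defs
  imports Complex_Main
begin

text \<open>A path is represented by its value (weight, cost).\<close>
type_synonym pval = "real \<times> real"

definition dominates :: "pval \<Rightarrow> pval \<Rightarrow> bool" where
  "dominates p q \<longleftrightarrow> fst p \<le> fst q \<and> snd p \<le> snd q \<and> (fst p < fst q \<or> snd p < snd q)"

definition skyline :: "pval set \<Rightarrow> bool" where
  "skyline S \<longleftrightarrow> (\<forall>p\<in>S. \<forall>q\<in>S. \<not> dominates p q)"

definition concat_path :: "pval \<Rightarrow> pval \<Rightarrow> pval" where
  "concat_path p q = (fst p + fst q, snd p + snd q)"

end

theory Submission
  imports Defs
begin

text \<open>In a skyline list sorted by weight, an earlier path is either equal to a later one or strictly
  lighter and strictly more expensive. Hence a concatenation \<open>p\<^sub>k\<^sup>l\<close> with \<open>k \<le> i\<close> and \<open>l \<le> j\<close>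
  is either \<open>p\<^sub>i\<^sup>j\<close> itself or strictly more expensive than it, and one with \<open>k \<ge> i\<close> and
  \<open>l \<ge> j\<close> is either \<open>p\<^sub>i\<^sup>j\<close> or strictly heavier; neither can dominate \<open>p\<^sub>i\<^sup>j\<close>. Only the index
  pairs of \<open>P\<^sub>3\<close> and \<open>P\<^sub>4\<close> remain.\<close>

lemma sorted_skyline_nth_le_cases:
  assumes "skyline (set ps)" "sorted (map fst ps)" "k \<le> i" "i < length ps"
  shows "ps ! k = ps ! i \<or> fst (ps ! k) < fst (ps ! i) \<and> snd (ps ! i) < snd (ps ! k)"
proof -
  have "fst (ps ! k) \<le> fst (ps ! i)"
    using assms(2-4) by (simp add: sorted_iff_nth_mono)
  moreover have "\<not> dominates (ps ! k) (ps ! i)" "\<not> dominates (ps ! i) (ps ! k)"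
    using assms(1,3,4) unfolding skyline_def by auto
  ultimately show ?thesis
    unfolding dominates_def by (auto simp: prod_eq_iff)
qed

lemma not_dominates_concat_if_costlier:
  assumes "p' = p \<or> snd p < snd p'" "q' = q \<or> snd q < snd q'"
  shows "\<not> dominates (concat_path p' q') (concat_path p q)"
  using assms by (auto simp: dominates_def concat_path_def)

lemma not_dominates_concat_if_heavier:
  assumes "p' = p \<or> fst p < fst p'" "q' = q \<or> fst q < fst q'"
  shows "\<not> dominates (concat_path p' q') (concat_path p q)"
  using assms by (auto simp: dominates_def concat_path_def)

theorem mainTheorem4:
  fixes ps qs :: "pval list" and i j :: nat
  assumes "skyline (set ps)" and "skyline (set qs)"
    and "sorted (map fst ps)" and "sorted (map fst qs)"
    and "i < length ps" and "j < length qs"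
  shows "(\<forall>r \<in> {concat_path (ps ! k) (qs ! l) | k l. k < length ps \<and> l < length qs}.
            \<not> dominates r (concat_path (ps ! i) (qs ! j)))
     \<longleftrightarrow> (\<forall>r \<in> {concat_path (ps ! k) (qs ! l) | k l. k < i \<and> j < l \<and> l < length qs}
                \<union> {concat_path (ps ! k) (qs ! l) | k l. i < k \<and> k < length ps \<and> l < j}.
            \<not> dominates r (concat_path (ps ! i) (qs ! j)))" (is "?all \<longleftrightarrow> ?crossed")
proof
  assume ?all
  then show ?crossed
    using assms(5,6) by fastforce
next
  assume crossed: ?crossed
  show ?all
  proof (intro ballI)
    fix r assume "r \<in> {concat_path (ps ! k) (qs ! l) | k l. k < length ps \<and> l < length qs}"
    then obtain k l where r: "r = concat_path (ps ! k) (qs ! l)" and kl: "k < length ps" "l < length qs"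
      by blast
    consider "k \<le> i" "l \<le> j" | "i \<le> k" "j \<le> l" | "k < i" "j < l" | "i < k" "l < j"
      by linarith
    then show "\<not> dominates r (concat_path (ps ! i) (qs ! j))"
    proof cases
      case 1
      show ?thesis
        unfolding r
        using sorted_skyline_nth_le_cases[OF assms(1,3) 1(1) assms(5)]
          sorted_skyline_nth_le_cases[OF assms(2,4) 1(2) assms(6)]
        by (intro not_dominates_concat_if_costlier) auto
    next
      case 2
      show ?thesis
        unfolding r
        using sorted_skyline_nth_le_cases[OF assms(1,3) 2(1) kl(1)]
          sorted_skyline_nth_le_cases[OF assms(2,4) 2(2) kl(2)]
        by (intro not_dominates_concat_if_heavier) auto
    qed (use crossed r kl in blast)+
  qed
qed

end
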